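(* Let $C,D\subseteq[n]\times[n]$ be diagrams and $k,l\in[n]$. If $\widehat{C}\le\widehat{D}$, then $\widehat{C}_{\mathrm{aug}}\le D$. In particular, every diagram $C'\le\widehat{D}$ with no boxes in row $k$ can be obtained from some diagram $C\le D$ by removing any boxes in row $k$ or column $l$ from $C$.
   Context: A diagram $D\subseteq[n]\times[n]$ is a set of boxes $(i,j)$ (row $i$, column $j$), identified with its column sequence $(D_1,\dots,D_n)$, $D_j=\{i:(i,j)\in D\}$. For $R,S\subseteq[n]$, $R\le S$ means $\#R=\#S$ and the $k$-th smallest element of $R$ is at most the $k$-th smallest element of $S$ for each $k$; for diagrams $C\le D$ means $C_j\le D_j$ for all $j$. For fixed $k,l$, $\widehat{C}$ and $\widehat{D}$ denote the diagrams obtained from $C$ and $D$ by removing all boxes in row $k$ or column $l$. For a diagram $\widehat{C}$ (with $D$ fixed), $\widehat{C}_{\mathrm{aug}}=\widehat{C}\cup\{(k,i):(k,i)\in D\}\cup\{(i,l):(i,l)\in D\}$. *)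

theory Defs
  imports Main
begin

type_synonym diagram = "(nat \<times> nat) set"

text \<open>A diagram in [n] x [n]; a box (i,j) is in row i, column j.\<close>
definition is_diagram :: "nat \<Rightarrow> diagram \<Rightarrow> bool" where
  "is_diagram n D \<longleftrightarrow> D \<subseteq> {1..n} \<times> {1..n}"

definition col :: "diagram \<Rightarrow> nat \<Rightarrow> nat set" where
  "col D j = {i. (i, j) \<in> D}"

definition set_le :: "nat set \<Rightarrow> nat set \<Rightarrow> bool" where
  "set_le R S \<longleftrightarrow> card R = card S \<and>
     (\<forall>m < card R. sorted_list_of_set R ! m \<le> sorted_list_of_set S ! m)"

definition diag_le :: "diagram \<Rightarrow> diagram \<Rightarrow> bool" where
  "diag_le C D \<longleftrightarrow> (\<forall>j. set_le (col C j) (col D j))"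

definition hat :: "nat \<Rightarrow> nat \<Rightarrow> diagram \<Rightarrow> diagram" where
  "hat k l D = {(i, j) \<in> D. i \<noteq> k \<and> j \<noteq> l}"

definition aug :: "nat \<Rightarrow> nat \<Rightarrow> diagram \<Rightarrow> diagram \<Rightarrow> diagram" where
  "aug k l D C = C \<union> {(k, i) | i. (k, i) \<in> D} \<union> {(i, l) | i. (i, l) \<in> D}"

end

theory Submission
  imports Defs
begin

text \<open>For finite sets of equal size, \<open>R \<le> S\<close> says that every initial segment
  \<open>{..t}\<close> contains at least as many elements of \<open>R\<close> as of \<open>S\<close>; in this form it is
  evidently preserved by inserting one new element into both sets. Away from column \<open>l\<close>,
  each column of the augmentation of \<open>hat C\<close> and of \<open>D\<close> arises from the corresponding
  column of \<open>hat C\<close> resp. \<open>hat D\<close> by inserting \<open>k\<close> exactly when \<open>(k, j) \<in> D\<close>, while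
  column \<open>l\<close> of both is that of \<open>D\<close>. For the second claim augment \<open>C'\<close> itself: its
  column \<open>l\<close> is empty because that of \<open>hat D\<close> is.\<close>

definition count_upto :: "nat set \<Rightarrow> nat \<Rightarrow> nat" where
  "count_upto R t = card {r \<in> R. r \<le> t}"

lemma sorted_nth_le_iff_length_filter:
  assumes "sorted xs" "m < length xs"
  shows "xs ! m \<le> (t::nat) \<longleftrightarrow> m < length (filter (\<lambda>x. x \<le> t) xs)"
  using assms
proof (induction xs arbitrary: m)
  case Nil
  then show ?case by simp
next
  case (Cons x ys)
  show ?case
  proof (cases "x \<le> t")
    case True
    with Cons show ?thesis by (cases m) auto
  next
    case False
    with Cons.prems have "filter (\<lambda>x. x \<le> t) ys = []" and "\<forall>y \<in> set ys. t < y"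
      by (auto simp: filter_empty_conv)
    with False Cons.prems show ?thesis
      by (cases m) (auto, metis nth_mem not_le)
  qed
qed

lemma sorted_list_of_set_nth_le_iff:
  assumes "finite R" "m < card R"
  shows "sorted_list_of_set R ! m \<le> t \<longleftrightarrow> m < count_upto R t"
proof -
  have "length (filter (\<lambda>x. x \<le> t) (sorted_list_of_set R))
      = card ({x. x \<le> t} \<inter> R)"
    using assms(1) by (subst distinct_length_filter) simp_all
  also have "\<dots> = count_upto R t"
    unfolding count_upto_def by (metis Collect_conj_eq Collect_mem_eq Int_commute)
  finally show ?thesis
    using assms by (simp add: sorted_nth_le_iff_length_filter)
qed

lemma count_upto_le_card: "finite R \<Longrightarrow> count_upto R t \<le> card R"
  unfolding count_upto_def by (intro card_mono) auto

lemma set_le_iff_count_upto: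
  assumes "finite R" "finite S"
  shows "set_le R S \<longleftrightarrow> card R = card S \<and> (\<forall>t. count_upto S t \<le> count_upto R t)"
proof
  assume le: "set_le R S"
  then have card_eq: "card R = card S" unfolding set_le_def by simp
  have "count_upto S t \<le> count_upto R t" for t
  proof (cases "count_upto S t = 0")
    case False
    define m where "m = count_upto S t - 1"
    have m: "m < card S"
      using False count_upto_le_card[OF assms(2), of t] unfolding m_def by linarith
    have "sorted_list_of_set S ! m \<le> t"
      using sorted_list_of_set_nth_le_iff[OF assms(2) m] False unfolding m_def by simp
    moreover have "sorted_list_of_set R ! m \<le> sorted_list_of_set S ! m"
      using le m card_eq unfolding set_le_def by simp
    ultimately have "sorted_list_of_set R ! m \<le> t" by (rule order_trans[rotated])
    then have "m < count_upto R t"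
      using sorted_list_of_set_nth_le_iff[OF assms(1)] m card_eq by simp
    then show ?thesis unfolding m_def by simp
  qed simp
  with card_eq show "card R = card S \<and> (\<forall>t. count_upto S t \<le> count_upto R t)" by simp
next
  assume counts: "card R = card S \<and> (\<forall>t. count_upto S t \<le> count_upto R t)"
  show "set_le R S" unfolding set_le_def
  proof (intro conjI allI impI)
    show "card R = card S" using counts by simp
    fix m assume m: "m < card R"
    let ?s = "sorted_list_of_set S ! m"
    have "m < count_upto S ?s"
      using sorted_list_of_set_nth_le_iff[OF assms(2), of m ?s] m counts by simp
    also have "\<dots> \<le> count_upto R ?s" using counts by simp
    finally show "sorted_list_of_set R ! m \<le> ?s"
      using sorted_list_of_set_nth_le_iff[OF assms(1) m] by simp
  qed
qed

lemma count_upto_insert: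
  assumes "finite R" "k \<notin> R"
  shows "count_upto (insert k R) t = count_upto R t + (if k \<le> t then 1 else 0)"
proof (cases "k \<le> t")
  case True
  then have "{r \<in> insert k R. r \<le> t} = insert k {r \<in> R. r \<le> t}" by auto
  with True assms show ?thesis unfolding count_upto_def by simp
next
  case False
  then have "{r \<in> insert k R. r \<le> t} = {r \<in> R. r \<le> t}" by auto
  with False show ?thesis unfolding count_upto_def by simp
qed

lemma set_le_insert:
  assumes "finite R" "finite S" "k \<notin> R" "k \<notin> S" "set_le R S"
  shows "set_le (insert k R) (insert k S)"
  using assms by (simp add: set_le_iff_count_upto count_upto_insert)

lemma finite_col: "finite X \<Longrightarrow> finite (col X j)"
proof -
  assume "finite X"
  moreover have "col X j \<subseteq> fst ` X" unfolding col_def by force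
  ultimately show ?thesis by (simp add: finite_subset)
qed

lemma finite_hat: "finite X \<Longrightarrow> finite (hat k l X)"
  unfolding hat_def by (auto intro: finite_subset)

lemma finite_diagram: "is_diagram n X \<Longrightarrow> finite X"
  unfolding is_diagram_def using finite_subset by blast

lemma diag_le_aug:
  assumes "finite X" "finite D"
    and no_row: "\<forall>j. (k, j) \<notin> X" and no_col: "\<forall>i. (i, l) \<notin> X"
    and le: "diag_le X (hat k l D)"
  shows "diag_le (aug k l D X) D"
  unfolding diag_le_def
proof
  fix j
  show "set_le (col (aug k l D X) j) (col D j)"
  proof (cases "j = l")
    case True
    with no_col have "col (aug k l D X) j = col D j"
      unfolding col_def aug_def by auto
    then show ?thesis unfolding set_le_def by simp
  next
    case False
    have le_j: "set_le (col X j) (col (hat k l D) j)"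
      using le unfolding diag_le_def by simp
    have k_notin: "k \<notin> col X j" "k \<notin> col (hat k l D) j"
      using no_row unfolding col_def hat_def by auto
    have finite_cols: "finite (col X j)" "finite (col (hat k l D) j)"
      using assms(1,2) by (simp_all add: finite_col finite_hat)
    show ?thesis
    proof (cases "(k, j) \<in> D")
      case True
      with False have "col (aug k l D X) j = insert k (col X j)"
        and "col D j = insert k (col (hat k l D) j)"
        unfolding col_def aug_def hat_def by auto
      then show ?thesis
        using set_le_insert[OF finite_cols k_notin le_j] by simp
    next
      case not_in: False
      with False have "col (aug k l D X) j = col X j" and "col D j = col (hat k l D) j"
        unfolding col_def aug_def hat_def by auto
      with le_j show ?thesis by simp
    qed
  qed
qed

theorem lemma5p6:
  fixes n k l :: nat and C D :: diagram
  assumes "is_diagram n C" and "is_diagram n D"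
    and "k \<in> {1..n}" and "l \<in> {1..n}"
  shows "(diag_le (hat k l C) (hat k l D) \<longrightarrow> diag_le (aug k l D (hat k l C)) D)
    \<and> (\<forall>C'. is_diagram n C' \<and> diag_le C' (hat k l D) \<and> (\<forall>j. (k, j) \<notin> C')
          \<longrightarrow> (\<exists>C0. is_diagram n C0 \<and> diag_le C0 D \<and> hat k l C0 = C'))"
proof (intro conjI impI allI)
  have "finite C" "finite D" using assms(1,2) by (simp_all add: finite_diagram)
  then show "diag_le (aug k l D (hat k l C)) D" if "diag_le (hat k l C) (hat k l D)"
    using diag_le_aug[OF finite_hat _ _ _ that] unfolding hat_def by auto
next
  fix C' assume C': "is_diagram n C' \<and> diag_le C' (hat k l D) \<and> (\<forall>j. (k, j) \<notin> C')"
  then have "finite C'" using finite_diagram by blast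
  have "card (col C' l) = card (col (hat k l D) l)"
    using C' unfolding diag_le_def set_le_def by simp
  also have "col (hat k l D) l = {}" unfolding col_def hat_def by auto
  finally have no_col: "\<forall>i. (i, l) \<notin> C'"
    using finite_col[OF \<open>finite C'\<close>] unfolding col_def by simp
  show "\<exists>C0. is_diagram n C0 \<and> diag_le C0 D \<and> hat k l C0 = C'"
  proof (intro exI conjI)
    show "is_diagram n (aug k l D C')"
      using C' assms(2) unfolding is_diagram_def aug_def by auto
    show "diag_le (aug k l D C') D"
      using diag_le_aug[OF \<open>finite C'\<close> finite_diagram[OF assms(2)] _ no_col] C' by auto
    show "hat k l (aug k l D C') = C'"
      using C' no_col unfolding hat_def aug_def by auto
  qed
qed

end
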